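(* Let $(V,o)$ be a normal surface singularity of degree two (i.e. $Z^2=-2$) with $p_f(V,o)>0$, where $Z$ is the fundamental cycle on the minimal resolution. Assume that $Z$ is essentially irreducible and $D_m=Z_{min}$, where $D_m$ is the smallest term of the Yau sequence for $Z$ and $m$ its length. Then, with $p=p_f(V,o)$ and $Y$ the Yau cycle, $$p_a(V,o)=p_a\Big(\big(\big[\tfrac{p-1}{2}\big]+1\big)Y\Big)=m\Big(p-1-\big[\tfrac{p-1}{2}\big]\Big)\big[\tfrac{p+1}{2}\big]+1=\big[\tfrac{p^2}{4}\big]m+1 .$$
   Context: $[a]=\max\{n\in\mathbb Z\mid n\le a\}$. Let $\pi\colon X\to V$ be the minimal resolution and $\pi^{-1}(o)=\bigcup_{i=1}^n E_i$ the irreducible components of the exceptional set. A cycle is $D=\sum d_iE_i$, $d_i\in\mathbb Z$; $D_1\le D_2$ is coefficientwise, $D_1<D_2$ means $D_1\le D_2$, $D_1\ne D_2$. $K$ is the canonical divisor of $X$; for a cycle $D>0$, $p_a(D)=1+\frac12(D^2+D\cdot K)$. The fundamental cycle $Z$ is the smallest cycle $D>0$ with support $\pi^{-1}(o)$ and $D\cdot E_i\le 0$ for all $i$; $p_f(V,o)=p_a(Z)$; degree is $-Z^2$; $p_a(V,o)=\max\{p_a(D)\mid D>0\text{ a cycle}\}$. "$\mathcal O_D(-C)$ numerically trivial" means $C\cdot E=0$ for every component $E\le D$. $Z_{min}$ is the unique minimal cycle $0<Z_{min}\le Z$ with $p_a(Z_{min})=p_a(Z)$. Yau sequence: for a cycle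 $D$ that is the fundamental cycle on its support with $Z_{min}\le D$, $p_a(D)=p_f(V,o)$ and $D\cdot E=0$ for all components $E\le Z_{min}$, its Tyurina component is the unique maximal cycle $0<D'<D$ with $\mathcal O_{D'}(-D)$ numerically trivial and $p_a(D')=p_a(D)$. Set $D_1=Z$, $D_{i+1}=$ Tyurina component of $D_i$ as long as $D_i\cdot E=0$ for all components $E\le Z_{min}$, stopping at the first $D_m$ with $D_m\cdot Z_{min}<0$. Then $0<D_m<\dots<D_1=Z$ is the Yau sequence, $m$ its length, $Y=\sum_{i=1}^m D_i$ the Yau cycle. A $(-2)$-curve is a smooth rational exceptional curve $E$ with $E^2=-2$. $Z$ is essentially irreducible if there is a component $A\le Z$ which is not a $(-2)$-curve such that, with $k$ the coefficient of $A$ in $Z$, either $Z=kA$ or all components of $Z-kA$ are $(-2)$-curves. *)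

theory Defs
  imports Main "HOL-Library.Function_Algebras"
begin

text \<open>Numerical model of the minimal resolution of a normal surface singularity.
  Components of the exceptional set are the elements of a finite type 'e.
  M i j = E_i . E_j (intersection matrix), g i = arithmetic genus p_a(E_i).
  By adjunction K . E_i = 2 g_i - 2 - E_i^2.  Cycles are functions 'e => int.\<close>

definition unitc :: "'e \<Rightarrow> 'e \<Rightarrow> int" where
  "unitc i = (\<lambda>j. if j = i then 1 else 0)"

definition inter :: "('e::finite \<Rightarrow> 'e \<Rightarrow> int) \<Rightarrow> ('e \<Rightarrow> int) \<Rightarrow> ('e \<Rightarrow> int) \<Rightarrow> int" where
  "inter M D1 D2 = (\<Sum>i\<in>UNIV. \<Sum>j\<in>UNIV. D1 i * D2 j * M i j)"

definition canon :: "('e::finite \<Rightarrow> 'e \<Rightarrow> int) \<Rightarrow> ('e \<Rightarrow> int) \<Rightarrow> ('e \<Rightarrow> int) \<Rightarrow> int" where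
  "canon M g D = (\<Sum>i\<in>UNIV. D i * (2 * g i - 2 - M i i))"

text \<open>p_a(D) = 1 + (D^2 + K.D)/2; D^2 + K.D is always even, so div 2 is exact.\<close>
definition pa :: "('e::finite \<Rightarrow> 'e \<Rightarrow> int) \<Rightarrow> ('e \<Rightarrow> int) \<Rightarrow> ('e \<Rightarrow> int) \<Rightarrow> int" where
  "pa M g D = 1 + (inter M D D + canon M g D) div 2"

definition supp :: "('e \<Rightarrow> int) \<Rightarrow> 'e set" where
  "supp D = {i. D i \<noteq> 0}"

text \<open>Standing assumptions: the data of the minimal resolution of a normal surface
  singularity (symmetric, nonnegative off-diagonal, negative definite, connected
  exceptional set, no smooth rational (-1)-curve).\<close>
definition resolution_data :: "('e::finite \<Rightarrow> 'e \<Rightarrow> int) \<Rightarrow> ('e \<Rightarrow> int) \<Rightarrow> bool" where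
  "resolution_data M g \<longleftrightarrow>
     (\<forall>i j. M i j = M j i) \<and>
     (\<forall>i j. i \<noteq> j \<longrightarrow> M i j \<ge> 0) \<and>
     (\<forall>D. D \<noteq> 0 \<longrightarrow> inter M D D < 0) \<and>
     (\<forall>i j. (\<lambda>a b. a \<noteq> b \<and> M a b > 0)\<^sup>*\<^sup>* i j) \<and>
     (\<forall>i. g i \<ge> 0) \<and>
     (\<forall>i. \<not> (g i = 0 \<and> M i i = -1))"

definition minus_two_curve :: "('e \<Rightarrow> 'e \<Rightarrow> int) \<Rightarrow> ('e \<Rightarrow> int) \<Rightarrow> 'e \<Rightarrow> bool" where
  "minus_two_curve M g i \<longleftrightarrow> g i = 0 \<and> M i i = -2"

definition fund_cand :: "('e::finite \<Rightarrow> 'e \<Rightarrow> int) \<Rightarrow> 'e set \<Rightarrow> ('e \<Rightarrow> int) \<Rightarrow> bool" where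
  "fund_cand M S D \<longleftrightarrow> 0 < D \<and> supp D = S \<and> (\<forall>i\<in>S. inter M D (unitc i) \<le> 0)"

definition fund_cycle_on :: "('e::finite \<Rightarrow> 'e \<Rightarrow> int) \<Rightarrow> 'e set \<Rightarrow> ('e \<Rightarrow> int) \<Rightarrow> bool" where
  "fund_cycle_on M S D \<longleftrightarrow> fund_cand M S D \<and> (\<forall>D'. fund_cand M S D' \<longrightarrow> D \<le> D')"

definition is_Zmin :: "('e::finite \<Rightarrow> 'e \<Rightarrow> int) \<Rightarrow> ('e \<Rightarrow> int) \<Rightarrow> ('e \<Rightarrow> int) \<Rightarrow> ('e \<Rightarrow> int) \<Rightarrow> bool" where
  "is_Zmin M g Z X \<longleftrightarrow> 0 < X \<and> X \<le> Z \<and> pa M g X = pa M g Z \<and>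
     (\<forall>X'. 0 < X' \<and> X' \<le> Z \<and> pa M g X' = pa M g Z \<longrightarrow> X \<le> X')"

text \<open>A component E is "\<le> D" iff its coefficient in D is at least 1.\<close>
definition tyurina_cand :: "('e::finite \<Rightarrow> 'e \<Rightarrow> int) \<Rightarrow> ('e \<Rightarrow> int) \<Rightarrow> ('e \<Rightarrow> int) \<Rightarrow> ('e \<Rightarrow> int) \<Rightarrow> bool" where
  "tyurina_cand M g D D' \<longleftrightarrow> 0 < D' \<and> D' < D \<and>
     (\<forall>E. D' E \<ge> 1 \<longrightarrow> inter M D (unitc E) = 0) \<and> pa M g D' = pa M g D"

definition tyurina :: "('e::finite \<Rightarrow> 'e \<Rightarrow> int) \<Rightarrow> ('e \<Rightarrow> int) \<Rightarrow> ('e \<Rightarrow> int) \<Rightarrow> ('e \<Rightarrow> int) \<Rightarrow> bool" where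
  "tyurina M g D D' \<longleftrightarrow> tyurina_cand M g D D' \<and> (\<forall>D''. tyurina_cand M g D D'' \<longrightarrow> D'' \<le> D')"

definition yau_seq :: "('e::finite \<Rightarrow> 'e \<Rightarrow> int) \<Rightarrow> ('e \<Rightarrow> int) \<Rightarrow> ('e \<Rightarrow> int) \<Rightarrow> ('e \<Rightarrow> int) \<Rightarrow> ('e \<Rightarrow> int) list \<Rightarrow> bool" where
  "yau_seq M g Z Zm Ds \<longleftrightarrow> Ds \<noteq> [] \<and> hd Ds = Z \<and>
     (\<forall>i. Suc i < length Ds \<longrightarrow>
        (\<forall>E. Zm E \<ge> 1 \<longrightarrow> inter M (Ds ! i) (unitc E) = 0) \<and> tyurina M g (Ds ! i) (Ds ! Suc i)) \<and>
     inter M (last Ds) Zm < 0"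

definition ess_irreducible :: "('e::finite \<Rightarrow> 'e \<Rightarrow> int) \<Rightarrow> ('e \<Rightarrow> int) \<Rightarrow> ('e \<Rightarrow> int) \<Rightarrow> bool" where
  "ess_irreducible M g Z \<longleftrightarrow> (\<exists>A. Z A \<ge> 1 \<and> \<not> minus_two_curve M g A \<and>
     (let k = Z A; R = Z - (\<lambda>j. k * unitc A j) in
       R = 0 \<or> (\<forall>E\<in>supp R. minus_two_curve M g E)))"

definition pa_sing :: "('e::finite \<Rightarrow> 'e \<Rightarrow> int) \<Rightarrow> ('e \<Rightarrow> int) \<Rightarrow> int" where
  "pa_sing M g = (GREATEST x. \<exists>D. 0 < D \<and> x = pa M g D)"

end

(* As every component other than A is a (-2)-curve, K.D = (K.A) D_A for every cycle D,
   and Z^2 = -2 gives k (K.A) = 2p, where k is the coefficient of A in Z.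
   The heart of the proof is that the Yau cycle Y is orthogonal to every (-2)-curve. This is
   shown for the tails D_j + ... + D_m by descending induction along the Yau sequence, using
   Laufer's inequality p_a(U) <= p_a(Z) for 0 < U <= Z, the maximality of the Tyurina
   components and the minimality of Z_min. Hence Y.D = D_A (Y.A), and comparing K.Y with Y^2
   shows K.D = -p Y.D, i.e. 2 p_a(X) - 2 = X^2 - p Y.X. For p >= 2 every D_i has A-coefficient
   k and D_i^2 = -2, so Y^2 = -2m. Completing the square with r = [p/2] and using
   X^2 <= Y.X for all cycles X bounds p_a(X) by m [p/2] [(p+1)/2] + 1, which is attained
   at X = [(p+1)/2] Y. *)

theory Submission
  imports Defs
begin

definition adj :: "('e::finite \<Rightarrow> 'e \<Rightarrow> int) \<Rightarrow> ('e \<Rightarrow> int) \<Rightarrow> ('e \<Rightarrow> int) \<Rightarrow> int" where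
  "adj M g D = inter M D D + canon M g D"

lemma sum_fun_apply: "(\<Sum>l\<in>S. f l) x = (\<Sum>l\<in>S. f l x)"
  by (induction S rule: infinite_finite_induct) auto

lemma zero_less_fun_iff: "0 < (U::'a \<Rightarrow> int) \<longleftrightarrow> (\<forall>i. U i \<ge> 0) \<and> (\<exists>i. U i \<noteq> 0)"
  by (auto simp: less_le le_fun_def fun_eq_iff)

lemma zero_less_funI: "(U::'a \<Rightarrow> int) \<ge> 0 \<Longrightarrow> U a \<noteq> 0 \<Longrightarrow> 0 < U"
  by (auto simp: zero_less_fun_iff le_fun_def)

lemma zero_less_add_unitc:
  assumes "0 < (X::'e \<Rightarrow> int)"
  shows "0 < X + unitc E"
proof (rule zero_less_funI)
  have X0: "X i \<ge> 0" for i
    using assms by (simp add: zero_less_fun_iff)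
  then show "X + unitc E \<ge> 0"
    by (simp add: le_fun_def unitc_def)
  show "(X + unitc E) E \<noteq> 0"
    using X0[of E] by (simp add: unitc_def)
qed

lemma sum_times_unitc: "(\<Sum>j\<in>UNIV. f j * unitc i j) = f (i::'e::finite)"
  by (simp add: unitc_def if_distrib cong: if_cong)

lemma inter_unitc_right: "inter M X (unitc j) = (\<Sum>i\<in>UNIV. X i * M i j)"
proof -
  have "(\<Sum>k\<in>UNIV. X i * unitc j k * M i k) = X i * M i j" for i
    using sum_times_unitc[of "\<lambda>k. X i * M i k" j] by (simp add: mult_ac)
  then show ?thesis
    unfolding inter_def by simp
qed

lemma inter_unitc_unitc: "inter M (unitc i) (unitc j) = M i j"
  unfolding inter_unitc_right using sum_times_unitc[of "\<lambda>k. M k j" i] by (simp add: mult_ac)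

lemma inter_eq_sum_unitc: "inter M X W = (\<Sum>j\<in>UNIV. W j * inter M X (unitc j))"
  unfolding inter_unitc_right unfolding inter_def
  by (subst sum.swap) (simp add: sum_distrib_left mult_ac)

lemma inter_add_left: "inter M (X + W) V = inter M X V + inter M W V"
  unfolding inter_def by (simp add: algebra_simps sum.distrib)

lemma inter_add_right: "inter M V (X + W) = inter M V X + inter M V W"
  unfolding inter_def by (simp add: algebra_simps sum.distrib)

lemma inter_diff_left: "inter M (X - W) V = inter M X V - inter M W V"
  unfolding inter_def by (simp add: algebra_simps sum_subtractf)

lemma inter_diff_right: "inter M V (X - W) = inter M V X - inter M V W"
  unfolding inter_def by (simp add: algebra_simps sum_subtractf)

lemma inter_scale_left: "inter M (\<lambda>i. n * X i) V = n * inter M X V"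
  unfolding inter_def by (simp add: algebra_simps sum_distrib_left)

lemma inter_scale_right: "inter M V (\<lambda>i. n * X i) = n * inter M V X"
  unfolding inter_def by (simp add: algebra_simps sum_distrib_left)

lemma inter_zero_left [simp]: "inter M 0 V = 0"
  unfolding inter_def by simp

lemma inter_zero_right [simp]: "inter M V 0 = 0"
  unfolding inter_def by simp

lemma inter_sum_left: "inter M (\<Sum>l\<in>S. X l) V = (\<Sum>l\<in>S. inter M (X l) V)"
proof (induction S rule: infinite_finite_induct)
  case (insert x F)
  then show ?case by (simp only: sum.insert[OF insert.hyps] inter_add_left insert.IH)
qed (simp_all add: inter_def)

lemma inter_sum_right: "inter M V (\<Sum>l\<in>S. X l) = (\<Sum>l\<in>S. inter M V (X l))"
proof (induction S rule: infinite_finite_induct)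
  case (insert x F)
  then show ?case by (simp only: sum.insert[OF insert.hyps] inter_add_right insert.IH)
qed (simp_all add: inter_def)

lemma inter_commute: "\<forall>i j. M i j = M j i \<Longrightarrow> inter M X W = inter M W X"
  unfolding inter_def by (subst sum.swap) (simp add: mult_ac)

lemma inter_sum_self_orthogonal:
  assumes "\<And>l l'. l \<in> S \<Longrightarrow> l' \<in> S \<Longrightarrow> l \<noteq> l' \<Longrightarrow> inter M (X l) (X l') = 0"
  shows "inter M (\<Sum>l\<in>S. X l) (\<Sum>l\<in>S. X l) = (\<Sum>l\<in>S. inter M (X l) (X l))"
proof -
  have "inter M (\<Sum>l\<in>S. X l) (\<Sum>l\<in>S. X l) = (\<Sum>l\<in>S. \<Sum>l'\<in>S. inter M (X l) (X l'))"
    unfolding inter_sum_left inter_sum_right by (rule sum.swap)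
  also have "\<dots> = (\<Sum>l\<in>S. \<Sum>l'\<in>S. if l' = l then inter M (X l) (X l) else 0)"
    using assms by (intro sum.cong refl) auto
  also have "\<dots> = (\<Sum>l\<in>S. inter M (X l) (X l))"
    by (cases "finite S") simp_all
  finally show ?thesis .
qed

lemma inter_lin_left: "inter M (\<lambda>i. a * X i + b * W i) V = a * inter M X V + b * inter M W V"
  unfolding inter_def by (simp add: algebra_simps sum.distrib sum_distrib_left)

lemma inter_lin_right: "inter M V (\<lambda>i. a * X i + b * W i) = a * inter M V X + b * inter M V W"
  unfolding inter_def by (simp add: algebra_simps sum.distrib sum_distrib_left)

lemma int_div_2_mult: "(p::int) div 2 * ((p + 1) div 2) = p\<^sup>2 div 4"
proof (cases "even p")
  case True
  then obtain r where "p = 2 * r" by blast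
  then show ?thesis by (simp add: power2_eq_square)
next
  case False
  then obtain r where p: "p = 2 * r + 1" using oddE by blast
  then have "p\<^sup>2 = 4 * (r * r + r) + 1"
    by (simp add: power2_eq_square algebra_simps)
  then have "p\<^sup>2 div 4 = r * r + r"
    by presburger
  then show ?thesis
    using p by (simp add: algebra_simps)
qed

definition indicator_cycle :: "'e set \<Rightarrow> 'e \<Rightarrow> int" where
  "indicator_cycle Q = (\<lambda>i. if i \<in> Q then 1 else 0)"

lemma indicator_cycle_insert:
  "F \<notin> Q \<Longrightarrow> indicator_cycle (insert F Q) = indicator_cycle Q + unitc F"
  by (auto simp: indicator_cycle_def unitc_def fun_eq_iff)

lemma inter_indicator_cycle: "inter M X (indicator_cycle Q) = (\<Sum>G\<in>Q. inter M X (unitc G))"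
proof -
  have "inter M X (indicator_cycle Q) = (\<Sum>G\<in>UNIV. if G \<in> Q then inter M X (unitc G) else 0)"
    by (subst inter_eq_sum_unitc) (intro sum.cong refl, simp add: indicator_cycle_def)
  then show ?thesis
    by (simp add: sum.If_cases)
qed

lemma inter_eq_coeff_mult_dot:
  assumes "\<And>E. E \<noteq> A \<Longrightarrow> W E \<noteq> 0 \<Longrightarrow> inter M X (unitc E) = 0"
  shows "inter M X W = W A * inter M X (unitc A)"
proof -
  have "inter M X W = (\<Sum>E\<in>UNIV. if E = A then W A * inter M X (unitc A) else 0)"
    unfolding inter_eq_sum_unitc[of M X W] using assms by (intro sum.cong refl) auto
  then show ?thesis by simp
qed

lemma canon_add: "canon M g (X + W) = canon M g X + canon M g W"
  unfolding canon_def by (simp add: distrib_right sum.distrib)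

lemma canon_scale: "canon M g (\<lambda>i. n * X i) = n * canon M g X"
  unfolding canon_def by (simp add: algebra_simps sum_distrib_left)

lemma canon_unitc: "canon M g (unitc j) = 2 * g j - 2 - M j j"
  unfolding canon_def using sum_times_unitc[of "\<lambda>k. 2 * g k - 2 - M k k" j] by (simp add: mult_ac)

lemma adj_add:
  assumes "\<forall>i j. M i j = M j i"
  shows "adj M g (X + W) = adj M g X + adj M g W + 2 * inter M X W"
  using inter_commute[OF assms, of W X]
  unfolding adj_def by (simp add: inter_add_left inter_add_right canon_add)

lemma adj_diff:
  assumes "\<forall>i j. M i j = M j i"
  shows "adj M g (X - W) = adj M g X - adj M g W - 2 * inter M (X - W) W"
  using adj_add[OF assms, of g "X - W" W] by simp

lemma adj_scale_unitc: "adj M g (\<lambda>j. n * unitc i j) = M i i * (n * n - n) + 2 * n * (g i - 1)"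
  unfolding adj_def
  by (simp add: inter_scale_left inter_scale_right canon_scale inter_unitc_unitc canon_unitc algebra_simps)

lemma even_adj:
  assumes "\<forall>i j. M i j = M j i"
  shows "even (adj M g D)"
proof -
  have "even (adj M g (\<lambda>j. if j \<in> S then D j else 0))" for S
  proof (induction S rule: finite_induct[OF finite])
    case 1
    then show ?case by (simp add: adj_def zero_fun_def[symmetric] canon_def)
  next
    case (2 i S)
    have "(\<lambda>j. if j \<in> insert i S then D j else 0)
        = (\<lambda>j. if j \<in> S then D j else 0) + (\<lambda>j. D i * unitc i j)"
      using 2 by (auto simp: unitc_def fun_eq_iff)
    then show ?case
      using 2 by (simp add: adj_add[OF assms] adj_scale_unitc)
  qed
  from this[of UNIV] show ?thesis by simp
qed

lemma adj_eq_pa: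
  assumes "\<forall>i j. M i j = M j i"
  shows "adj M g D = 2 * pa M g D - 2"
  using even_adj[OF assms, of g D] by (simp add: pa_def adj_def[symmetric])

lemma inter_unitc_ge_coeff:
  assumes "\<forall>i j. i \<noteq> j \<longrightarrow> M i j \<ge> 0" and "X \<ge> 0" and "X E = 0"
  shows "inter M X (unitc E) \<ge> X G * M G E"
proof -
  have nonneg: "X i * M i E \<ge> 0" for i
    using assms by (cases "i = E") (auto simp: le_fun_def)
  have "X G * M G E = (\<Sum>i\<in>{G}. X i * M i E)" by simp
  also have "\<dots> \<le> (\<Sum>i\<in>UNIV. X i * M i E)"
    using nonneg by (intro sum_mono2) auto
  finally show ?thesis by (simp add: inter_unitc_right)
qed

lemma inter_unitc_nonneg:
  assumes "\<forall>i j. i \<noteq> j \<longrightarrow> M i j \<ge> 0" and "X \<ge> 0" and "X E = 0"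
  shows "inter M X (unitc E) \<ge> 0"
  using inter_unitc_ge_coeff[OF assms, of E] assms(3) by simp

locale resolution =
  fixes M :: "'e::finite \<Rightarrow> 'e \<Rightarrow> int" and g :: "'e \<Rightarrow> int"
  assumes resolution_data: "resolution_data M g"
begin

abbreviation dot :: "('e \<Rightarrow> int) \<Rightarrow> 'e \<Rightarrow> int" where
  "dot X E \<equiv> inter M X (unitc E)"

lemma M_sym: "\<forall>i j. M i j = M j i"
  using resolution_data by (simp add: resolution_data_def)

lemma M_nonneg_off_diag: "\<forall>i j. i \<noteq> j \<longrightarrow> M i j \<ge> 0"
  using resolution_data by (simp add: resolution_data_def)

lemma inter_self_neg: "D \<noteq> 0 \<Longrightarrow> inter M D D < 0"
  using resolution_data by (simp add: resolution_data_def)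

lemma inter_self_nonpos: "inter M D D \<le> 0"
  using inter_self_neg[of D] by (cases "D = 0") auto

lemma components_connected: "(\<lambda>a b. a \<noteq> b \<and> M a b > 0)\<^sup>*\<^sup>* i j"
  using resolution_data by (simp add: resolution_data_def)

lemma g_nonneg: "g i \<ge> 0"
  using resolution_data by (simp add: resolution_data_def)

lemma inter_sym: "inter M X W = inter M W X"
  by (rule inter_commute[OF M_sym])

lemma dot_ge_coeff: "X \<ge> 0 \<Longrightarrow> X E = 0 \<Longrightarrow> dot X E \<ge> X G * M G E"
  by (rule inter_unitc_ge_coeff[OF M_nonneg_off_diag])

lemma dot_nonneg: "X \<ge> 0 \<Longrightarrow> X E = 0 \<Longrightarrow> dot X E \<ge> 0"
  by (rule inter_unitc_nonneg[OF M_nonneg_off_diag])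

lemma dot_le_if_coeff_eq:
  assumes "U \<le> V" and "U E = V E"
  shows "dot U E \<le> dot V E"
proof -
  have "dot (V - U) E \<ge> 0"
    using assms by (intro dot_nonneg) (auto simp: le_fun_def)
  then show ?thesis by (simp add: inter_diff_left)
qed

lemma adj_add: "adj M g (X + W) = adj M g X + adj M g W + 2 * inter M X W"
  by (rule adj_add[OF M_sym])

lemma adj_diff: "adj M g (X - W) = adj M g X - adj M g W - 2 * inter M (X - W) W"
  by (rule adj_diff[OF M_sym])

lemma adj_eq_pa: "adj M g D = 2 * pa M g D - 2"
  by (rule adj_eq_pa[OF M_sym])

lemma adj_unitc: "adj M g (unitc E) = 2 * g E - 2"
  by (simp add: adj_def inter_unitc_unitc canon_unitc)

lemma nef_full_support:
  assumes "U \<ge> 0" and "U i \<noteq> 0" and "\<And>E. dot U E \<le> 0"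
  shows "U j \<ge> 1"
proof -
  from components_connected[of i j] have "U j \<noteq> 0"
  proof (induction rule: rtranclp_induct)
    case base
    then show ?case using assms(2) .
  next
    case (step y z)
    show ?case
    proof
      assume z0: "U z = 0"
      have "U y > 0"
        using step.IH assms(1) by (auto simp: le_fun_def less_le)
      then have "U y * M y z > 0"
        using step.hyps(2) by simp
      then have "dot U z > 0"
        using dot_ge_coeff[OF assms(1) z0, of y] by linarith
      then show False using assms(3)[of z] by simp
    qed
  qed
  moreover have "U j \<ge> 0"
    using assms(1) by (simp add: le_fun_def)
  ultimately show ?thesis by simp
qed

lemma inter_disjoint_supports_nonneg:
  assumes "U \<ge> 0" and "W \<ge> 0" and "\<And>E. W E \<noteq> 0 \<Longrightarrow> U E = 0"
  shows "inter M U W \<ge> 0"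
proof -
  have "W E * dot U E \<ge> 0" for E
    using assms dot_nonneg[of U E] by (cases "W E = 0") (auto simp: le_fun_def)
  then show ?thesis
    by (subst inter_eq_sum_unitc) (rule sum_nonneg)
qed

text \<open>Take Q maximal among the subsets of H containing E whose reduced cycle has
  self-intersection at least -2. A curve F of H - Q meeting Q positively could be added to Q,
  as the self-intersection changes by 2 (Q.F) - 2; so F does not meet Q at all.\<close>
lemma obtain_isolated_minus_two_config:
  assumes "E \<in> H" and minus_two: "\<forall>F\<in>H. M F F = -2"
  obtains Q where "E \<in> Q" and "Q \<subseteq> H"
    and "inter M (indicator_cycle Q) (indicator_cycle Q) \<ge> -2"
    and "\<And>G F. G \<in> Q \<Longrightarrow> F \<in> H - Q \<Longrightarrow> M G F = 0"
proof -
  let ?\<chi> = indicator_cycle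
  define QQ where "QQ = {Q. Q \<subseteq> H \<and> E \<in> Q \<and> inter M (?\<chi> Q) (?\<chi> Q) \<ge> -2}"
  have "?\<chi> {E} = unitc E"
    by (auto simp: indicator_cycle_def unitc_def fun_eq_iff)
  then have "{E} \<in> QQ"
    using assms by (simp add: QQ_def inter_unitc_unitc)
  then obtain Q where Q: "Q \<in> QQ" and Q_max: "\<And>Q'. Q' \<in> QQ \<Longrightarrow> Q \<subseteq> Q' \<Longrightarrow> Q = Q'"
    using finite_has_maximal[of QQ] by (metis empty_iff finite)
  have isolated: "M G F = 0" if G: "G \<in> Q" and F: "F \<in> H - Q" for G F
  proof -
    have "dot (?\<chi> Q) F \<le> 0"
    proof (rule ccontr)
      assume "\<not> dot (?\<chi> Q) F \<le> 0"
      moreover have "inter M (?\<chi> (insert F Q)) (?\<chi> (insert F Q))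
          = inter M (?\<chi> Q) (?\<chi> Q) + 2 * dot (?\<chi> Q) F + M F F"
        using F inter_sym[of "unitc F" "?\<chi> Q"]
        by (simp add: indicator_cycle_insert inter_add_left inter_add_right inter_unitc_unitc)
      ultimately have "insert F Q \<in> QQ"
        using Q F minus_two by (auto simp: QQ_def)
      then show False
        using Q_max F by blast
    qed
    moreover have "dot (?\<chi> Q) F \<ge> ?\<chi> Q G * M G F"
      using F by (intro dot_ge_coeff) (auto simp: indicator_cycle_def le_fun_def)
    moreover have "G \<noteq> F"
      using G F by blast
    then have "M G F \<ge> 0"
      using M_nonneg_off_diag by blast
    ultimately show ?thesis
      using G by (simp add: indicator_cycle_def)
  qed
  show ?thesis
    using Q isolated that by (auto simp: QQ_def)
qed

end

locale fundamental_cycle = resolution +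
  fixes Z
  assumes fundamental: "fund_cycle_on M UNIV Z"
begin

lemma Z_ge_1: "Z i \<ge> 1"
proof -
  have "0 < Z" and "supp Z = UNIV"
    using fundamental by (auto simp: fund_cycle_on_def fund_cand_def)
  then have "Z i \<ge> 0" and "Z i \<noteq> 0"
    by (auto simp: zero_less_fun_iff supp_def)
  then show ?thesis by simp
qed

lemma dot_Z_nonpos: "dot Z E \<le> 0"
  using fundamental by (simp add: fund_cycle_on_def fund_cand_def)

lemma Z_least:
  assumes "0 < U" and nef: "\<forall>E. dot U E \<le> 0"
  shows "Z \<le> U"
proof -
  obtain i where "U \<ge> 0" and "U i \<noteq> 0"
    using assms(1) by (auto simp: zero_less_fun_iff le_fun_def)
  then have "U j \<ge> 1" for j
    using nef_full_support nef by blast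
  then have "U j \<noteq> 0" for j
    by (metis not_one_le_zero)
  then have "supp U = UNIV"
    by (simp add: supp_def)
  then have "fund_cand M UNIV U"
    using assms by (simp add: fund_cand_def)
  then show ?thesis
    using fundamental by (simp add: fund_cycle_on_def)
qed

lemma coeff_less_Z_if_dot_pos:
  assumes "U \<le> Z" and "dot U E > 0"
  shows "U E < Z E"
proof (rule ccontr)
  assume "\<not> U E < Z E"
  moreover have "U E \<le> Z E"
    using assms(1) by (simp add: le_fun_def)
  ultimately have "U E = Z E" by simp
  then have "dot U E \<le> dot Z E"
    using dot_le_if_coeff_eq[OF assms(1)] by blast
  then show False
    using assms(2) dot_Z_nonpos[of E] by simp
qed

text \<open>Laufer's argument: a cycle below Z that is not nef can be enlarged by a component
  it meets positively, which does not decrease the adjunction number since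
  p_a of a component is nonnegative; the enlargement ends at Z.\<close>
lemma adj_le_fundamental:
  assumes "0 < U" and "U \<le> Z"
  shows "adj M g U \<le> adj M g Z"
  using assms
proof (induction "nat (\<Sum>i\<in>UNIV. Z i - U i)" arbitrary: U rule: less_induct)
  case less
  show ?case
  proof (cases "\<forall>E. dot U E \<le> 0")
    case True
    then have "U = Z"
      using Z_least less.prems by (simp add: order.antisym)
    then show ?thesis by simp
  next
    case False
    then obtain E where E: "dot U E > 0" by (meson not_le)
    define U' where "U' = U + unitc E"
    have "U E < Z E"
      using coeff_less_Z_if_dot_pos[OF less.prems(2) E] .
    then have U'_le: "U' \<le> Z"
      using less.prems(2) by (auto simp: U'_def le_fun_def unitc_def)
    have U'_pos: "0 < U'"
      using less.prems(1) unfolding U'_def by (rule zero_less_add_unitc)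
    have "(\<Sum>i\<in>UNIV. Z i - U' i) = (\<Sum>i\<in>UNIV. Z i - U i) - (\<Sum>i\<in>UNIV. unitc E i)"
      by (simp add: U'_def sum_subtractf[symmetric] algebra_simps)
    then have "(\<Sum>i\<in>UNIV. Z i - U' i) = (\<Sum>i\<in>UNIV. Z i - U i) - 1"
      using sum_times_unitc[of "\<lambda>_. 1" E] by simp
    moreover have "(\<Sum>i\<in>UNIV. Z i - U' i) \<ge> 0"
      using U'_le by (intro sum_nonneg) (auto simp: le_fun_def)
    ultimately have "adj M g U' \<le> adj M g Z"
      using less.hyps U'_pos U'_le by simp
    moreover have "adj M g U' = adj M g U + 2 * g E - 2 + 2 * dot U E"
      by (simp add: U'_def adj_add adj_unitc)
    ultimately show ?thesis
      using E g_nonneg[of E] by simp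
  qed
qed

lemma inter_min_Z_excess_nonpos:
  assumes "X \<ge> 0"
  shows "inter M (\<lambda>i. min (X i) (Z i)) (X - (\<lambda>i. min (X i) (Z i))) \<le> 0"
proof -
  let ?U = "\<lambda>i. min (X i) (Z i)"
  have "(X - ?U) E * dot ?U E \<le> 0" for E
  proof (cases "X E \<le> Z E")
    case False
    then have "dot ?U E \<le> dot Z E"
      by (intro dot_le_if_coeff_eq) (auto simp: le_fun_def)
    then show ?thesis
      using False dot_Z_nonpos[of E] by (simp add: mult_nonneg_nonpos)
  qed simp
  then show ?thesis
    by (subst inter_eq_sum_unitc) (rule sum_nonpos)
qed

lemma ess_irreducible_obtain_component:
  assumes "ess_irreducible M g Z"
  obtains A where "\<And>E. E \<noteq> A \<Longrightarrow> minus_two_curve M g E"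
proof -
  obtain A where A: "let R = Z - (\<lambda>j. Z A * unitc A j) in R = 0 \<or> (\<forall>E\<in>supp R. minus_two_curve M g E)"
    using assms unfolding ess_irreducible_def Let_def by blast
  define R where "R = Z - (\<lambda>j. Z A * unitc A j)"
  have "minus_two_curve M g E" if "E \<noteq> A" for E
  proof -
    have "R E \<noteq> 0"
      using that Z_ge_1[of E] by (simp add: R_def unitc_def)
    then have "R \<noteq> 0" and "E \<in> supp R"
      by (auto simp: supp_def)
    then show ?thesis
      using A by (simp add: Let_def R_def)
  qed
  then show thesis
    using that by blast
qed

end

locale yau_sequence = fundamental_cycle +
  fixes Zm and Ds
  assumes Zmin: "is_Zmin M g Z Zm"
    and yau: "yau_seq M g Z Zm Ds"
begin

abbreviation p where "p \<equiv> pa M g Z"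
abbreviation m where "m \<equiv> length Ds"
abbreviation D where "D i \<equiv> Ds ! i"

lemma m_pos: "0 < m"
  using yau by (simp add: yau_seq_def)

lemma D_0: "D 0 = Z"
  using yau by (auto simp: yau_seq_def hd_conv_nth)

lemma dot_D_Zmin_support: "Suc i < m \<Longrightarrow> Zm E \<ge> 1 \<Longrightarrow> dot (D i) E = 0"
  using yau by (simp add: yau_seq_def)

lemma tyurina_D: "Suc i < m \<Longrightarrow> tyurina M g (D i) (D (Suc i))"
  using yau by (simp add: yau_seq_def)

lemma tyurina_cand_D: "Suc i < m \<Longrightarrow> tyurina_cand M g (D i) (D (Suc i))"
  using tyurina_D by (simp add: tyurina_def)

lemma tyurina_cand_le_D_Suc: "Suc i < m \<Longrightarrow> tyurina_cand M g (D i) X \<Longrightarrow> X \<le> D (Suc i)"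
  using tyurina_D by (simp add: tyurina_def)

lemma dot_D_next_support: "Suc i < m \<Longrightarrow> D (Suc i) E \<ge> 1 \<Longrightarrow> dot (D i) E = 0"
  using tyurina_cand_D by (simp add: tyurina_cand_def)

lemma D_Suc_le: "Suc i < m \<Longrightarrow> D (Suc i) \<le> D i"
  using tyurina_cand_D by (simp add: tyurina_cand_def less_le)

lemma D_pos_le_Z_pa: "i < m \<Longrightarrow> 0 < D i \<and> D i \<le> Z \<and> pa M g (D i) = p"
proof (induction i)
  case 0
  have "0 < Z"
    using fundamental by (simp add: fund_cycle_on_def fund_cand_def)
  then show ?case
    by (simp add: D_0 zero_fun_def[symmetric])
next
  case (Suc i)
  then have "tyurina_cand M g (D i) (D (Suc i))"
    by (intro tyurina_cand_D)
  with Suc show ?case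
    by (auto simp: tyurina_cand_def zero_fun_def[symmetric] dest: less_imp_le intro: order_trans)
qed

lemma D_pos: "i < m \<Longrightarrow> 0 < D i"
  using D_pos_le_Z_pa by blast

lemma D_le_Z: "i < m \<Longrightarrow> D i \<le> Z"
  using D_pos_le_Z_pa by blast

lemma pa_D: "i < m \<Longrightarrow> pa M g (D i) = p"
  using D_pos_le_Z_pa by blast

lemma adj_D: "i < m \<Longrightarrow> adj M g (D i) = adj M g Z"
  using pa_D by (simp add: adj_eq_pa)

lemma D_nonneg: "i < m \<Longrightarrow> D i j \<ge> 0"
  using D_pos by (auto simp: zero_less_fun_iff)

lemma D_antimono: "i \<le> j \<Longrightarrow> j < m \<Longrightarrow> D j \<le> D i"
proof (induction j rule: dec_induct)
  case (step j)
  then show ?case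
    using D_Suc_le[of j] by (meson Suc_lessD order_trans)
qed simp

lemma D_orthogonal:
  assumes "i < j" and "j < m"
  shows "inter M (D i) (D j) = 0"
proof -
  have "D j E * dot (D i) E = 0" for E
  proof (cases "D j E = 0")
    case False
    then have "D j E \<ge> 1"
      using D_nonneg[OF assms(2), of E] by simp
    moreover have "D j \<le> D (Suc i)"
      using assms by (intro D_antimono) auto
    ultimately have "D (Suc i) E \<ge> 1"
      by (auto simp: le_fun_def dest: spec[of _ E])
    then show ?thesis
      using dot_D_next_support[of i E] assms by simp
  qed simp
  then have "(\<Sum>E\<in>UNIV. D j E * dot (D i) E) = 0"
    by (simp only: sum.neutral_const)
  then show ?thesis
    by (simp add: inter_eq_sum_unitc[of M "D i" "D j"])
qed

lemma Zm_pos: "0 < Zm" and Zm_le_Z: "Zm \<le> Z" and pa_Zm: "pa M g Zm = p"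
  using Zmin by (simp_all add: is_Zmin_def)

lemma Zm_least: "0 < X \<Longrightarrow> X \<le> Z \<Longrightarrow> pa M g X = p \<Longrightarrow> Zm \<le> X"
  using Zmin by (simp add: is_Zmin_def)

lemma Zm_le_D: "i < m \<Longrightarrow> Zm \<le> D i"
  using D_pos_le_Z_pa Zm_least by blast

definition tail where
  "tail j = (\<Sum>l\<in>{j..<m}. D l)"

lemma sum_list_eq_tail: "sum_list Ds = tail 0"
  by (simp add: tail_def sum_list_sum_nth)

lemma tail_Suc: "j < m \<Longrightarrow> tail j = D j + tail (Suc j)"
  by (simp add: tail_def sum.atLeast_Suc_lessThan)

lemma tail_last: "tail (m - 1) = D (m - 1)"
proof -
  have "{m - 1..<m} = {m - 1}"
    using m_pos by auto
  then show ?thesis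
    by (simp add: tail_def)
qed

lemma tail_apply: "tail j E = (\<Sum>l\<in>{j..<m}. D l E)"
  by (simp add: tail_def sum_fun_apply)

lemma tail_nonneg: "tail j E \<ge> 0"
  unfolding tail_apply by (intro sum_nonneg) (simp add: D_nonneg)

lemma tail_eq_0: "D j E = 0 \<Longrightarrow> tail j E = 0"
  unfolding tail_apply
proof (intro sum.neutral ballI)
  fix l assume "D j E = 0" and "l \<in> {j..<m}"
  then have "D l E \<le> D j E" and "D l E \<ge> 0"
    using D_antimono[of j l] D_nonneg[of l E] by (auto simp: le_fun_def dest: spec[of _ E])
  then show "D l E = 0"
    using \<open>D j E = 0\<close> by simp
qed

lemma D_orthogonal_tail: "j < l \<Longrightarrow> inter M (D j) (tail l) = 0"
  unfolding tail_def inter_sum_right by (simp add: D_orthogonal)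

lemma inter_tail_self: "inter M (tail j) (tail j) = (\<Sum>l\<in>{j..<m}. inter M (D l) (D l))"
  unfolding tail_def
proof (rule inter_sum_self_orthogonal)
  fix l l' assume "l \<in> {j..<m}" "l' \<in> {j..<m}" "l \<noteq> l'"
  then show "inter M (D l) (D l') = 0"
    using D_orthogonal[of l l'] D_orthogonal[of l' l] inter_sym[of "D l"]
    by (cases "l < l'") (auto simp: not_less_iff_gr_or_eq)
qed


lemma dot_tail_nonneg: "D j E = 0 \<Longrightarrow> dot (tail j) E \<ge> 0"
  using tail_nonneg tail_eq_0 by (intro dot_nonneg) (auto simp: le_fun_def)

lemma dot_tail_ge_dot_D:
  assumes "j < m" and "D j E = 0"
  shows "dot (tail j) E \<ge> dot (D j) E"
proof -
  have "tail (Suc j) E = 0"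
    using tail_eq_0[OF assms(2)] tail_Suc[OF assms(1)] tail_nonneg[of "Suc j" E] assms(2) by simp
  then have "dot (tail (Suc j)) E \<ge> 0"
    using tail_nonneg by (intro dot_nonneg) (auto simp: le_fun_def)
  then show ?thesis
    by (simp add: tail_Suc[OF assms(1)] inter_add_left)
qed

end

locale degree_two_ess_irreducible = yau_sequence +
  fixes A
  assumes minus_two_off_A: "E \<noteq> A \<Longrightarrow> minus_two_curve M g E"
    and Z_sq: "inter M Z Z = -2"
    and p_pos: "p > 0"
    and last_Ds: "last Ds = Zm"
begin

abbreviation k where "k \<equiv> Z A"

definition K_dot_A where "K_dot_A = 2 * g A - 2 - M A A"

lemma g_M_off_A: "E \<noteq> A \<Longrightarrow> g E = 0 \<and> M E E = -2"
  using minus_two_off_A by (simp add: minus_two_curve_def)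

lemma canon_eq: "canon M g X = X A * K_dot_A"
proof -
  have "canon M g X = (\<Sum>i\<in>UNIV. if i = A then X A * K_dot_A else 0)"
    unfolding canon_def by (intro sum.cong refl) (auto simp: K_dot_A_def dest: g_M_off_A)
  then show ?thesis by simp
qed

lemma adj_eq: "adj M g X = inter M X X + X A * K_dot_A"
  by (simp add: adj_def canon_eq)

lemma adj_Z: "adj M g Z = 2 * p - 2"
  by (rule adj_eq_pa)

lemma k_mult_K_dot_A: "k * K_dot_A = 2 * p"
  using adj_Z Z_sq by (simp add: adj_eq)

lemma K_dot_A_pos: "K_dot_A > 0"
proof (rule ccontr)
  assume "\<not> K_dot_A > 0"
  then have "k * K_dot_A \<le> 0"
    using Z_ge_1[of A] by (simp add: mult_nonneg_nonpos)
  then show False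
    using k_mult_K_dot_A p_pos by simp
qed

lemma adj_add_unitc: "E \<noteq> A \<Longrightarrow> adj M g (X + unitc E) = adj M g X - 2 + 2 * dot X E"
  using g_M_off_A[of E] by (simp add: adj_add adj_unitc)

lemma adj_diff_unitc: "E \<noteq> A \<Longrightarrow> adj M g (X - unitc E) = adj M g X - 2 - 2 * dot X E"
  using g_M_off_A[of E] by (simp add: adj_diff adj_unitc inter_diff_left inter_unitc_unitc)

lemma D_last: "D (m - 1) = Zm"
  using last_Ds m_pos by (simp add: last_conv_nth)

lemma Zm_A: "Zm A \<ge> 1"
proof (rule ccontr)
  assume "\<not> Zm A \<ge> 1"
  moreover have "Zm A \<ge> 0"
    using Zm_pos by (simp add: zero_less_fun_iff)
  ultimately have "adj M g Zm = inter M Zm Zm"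
    by (simp add: adj_eq)
  moreover have "inter M Zm Zm < 0"
    using Zm_pos by (intro inter_self_neg) simp
  moreover have "adj M g Zm = 2 * p - 2"
    using pa_Zm by (simp add: adj_eq_pa)
  ultimately show False
    using p_pos by simp
qed

lemma D_A: "i < m \<Longrightarrow> D i A \<ge> 1"
  using Zm_le_D[of i] Zm_A by (auto simp: le_fun_def intro: order_trans)

lemma dot_D_A: "Suc i < m \<Longrightarrow> dot (D i) A = 0"
  using dot_D_Zmin_support Zm_A by blast

lemma inter_D_self: "i < m \<Longrightarrow> inter M (D i) (D i) = 2 * p - 2 - K_dot_A * D i A"
  using adj_D[of i] adj_Z by (simp add: adj_eq algebra_simps)

lemma dot_D_ge_minus_1:
  assumes "i < m" and "E \<noteq> A" and "D i E \<ge> 1"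
  shows "dot (D i) E \<ge> -1"
proof (rule ccontr)
  assume "\<not> dot (D i) E \<ge> -1"
  define X where "X = D i - unitc E"
  have "0 < X"
  proof (rule zero_less_funI)
    show "X \<ge> 0"
      using assms D_nonneg[OF assms(1)] by (simp add: X_def le_fun_def unitc_def)
    show "X A \<noteq> 0"
      using assms D_A[OF assms(1)] by (simp add: X_def unitc_def)
  qed
  moreover have "X \<le> D i"
    by (simp add: X_def le_fun_def unitc_def)
  then have "X \<le> Z"
    using D_le_Z[OF assms(1)] by simp
  ultimately have "adj M g X \<le> adj M g Z"
    by (rule adj_le_fundamental)
  moreover have "adj M g X = adj M g Z - 2 - 2 * dot (D i) E"
    using adj_D[OF assms(1)] adj_diff_unitc[OF assms(2)] by (simp add: X_def)
  ultimately show False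
    using \<open>\<not> dot (D i) E \<ge> -1\<close> by simp
qed

lemma tyurina_cand_D_add_unitc:
  assumes j: "Suc j < m" and E: "E \<noteq> A" and le: "D (Suc j) + unitc E \<le> D j"
    and dot_j: "dot (D j) E = 0" and dot_Suc: "dot (D (Suc j)) E = 1"
  shows "tyurina_cand M g (D j) (D (Suc j) + unitc E)"
  unfolding tyurina_cand_def
proof (intro conjI allI impI)
  show "0 < D (Suc j) + unitc E"
    using D_pos[OF j] by (rule zero_less_add_unitc)
  have "adj M g (D (Suc j) + unitc E) = adj M g (D j)"
    using adj_D[OF j] adj_D[of j] j adj_add_unitc[OF E] dot_Suc by simp
  then show "pa M g (D (Suc j) + unitc E) = pa M g (D j)"
    by (simp add: adj_eq_pa)
  have "dot (D (Suc j) + unitc E) E = -1"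
    using dot_Suc g_M_off_A[OF E] by (simp add: inter_add_left inter_unitc_unitc)
  then have "D (Suc j) + unitc E \<noteq> D j"
    using dot_j by auto
  then show "D (Suc j) + unitc E < D j"
    using le by simp
next
  fix E' assume "1 \<le> (D (Suc j) + unitc E) E'"
  then show "dot (D j) E' = 0"
    using dot_j dot_D_next_support[OF j] by (cases "E' = E") (auto simp: unitc_def)
qed

lemma dot_D_Suc_nonpos:
  assumes j: "Suc j < m" and E: "E \<noteq> A" and less: "D (Suc j) E < D j E"
    and dot_j: "dot (D j) E = 0"
  shows "dot (D (Suc j)) E \<le> 0"
proof (rule ccontr)
  assume pos: "\<not> dot (D (Suc j)) E \<le> 0"
  define X where "X = D (Suc j) + unitc E"
  have le: "X \<le> D j"
    using D_Suc_le[OF j] less by (auto simp: X_def le_fun_def unitc_def)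
  have "0 < X"
    using D_pos[OF j] unfolding X_def by (rule zero_less_add_unitc)
  moreover have "X \<le> Z"
    using le D_le_Z[of j] j by (meson Suc_lessD order_trans)
  ultimately have "adj M g X \<le> adj M g Z"
    by (rule adj_le_fundamental)
  then have "dot (D (Suc j)) E = 1"
    using pos adj_D[OF j] adj_add_unitc[OF E] by (simp add: X_def)
  then have "tyurina_cand M g (D j) X"
    using tyurina_cand_D_add_unitc[OF j E] le dot_j by (simp add: X_def)
  then have "X \<le> D (Suc j)"
    by (rule tyurina_cand_le_D_Suc[OF j])
  then show False
    by (auto simp: X_def le_fun_def unitc_def dest: spec[of _ E])
qed

lemma dot_D_nonpos:
  assumes i: "i < m" and E: "E \<noteq> A" and "D i E \<ge> 1"
  shows "dot (D i) E \<le> 0"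
proof (cases i)
  case 0
  then show ?thesis
    using dot_Z_nonpos by (simp add: D_0)
next
  case (Suc j)
  with i have j: "Suc j < m" by simp
  have dot_j: "dot (D j) E = 0"
    using dot_D_next_support[OF j] assms(3) Suc by simp
  show ?thesis
  proof (cases "D (Suc j) E < D j E")
    case True
    then show ?thesis
      using dot_D_Suc_nonpos[OF j E _ dot_j] Suc by simp
  next
    case False
    then have "D (Suc j) E = D j E"
      using D_Suc_le[OF j] by (auto simp: le_fun_def dest: spec[of _ E])
    then have "dot (D (Suc j)) E \<le> dot (D j) E"
      using dot_le_if_coeff_eq D_Suc_le[OF j] by blast
    then show ?thesis
      using dot_j Suc by simp
  qed
qed

definition dropped_curves where
  "dropped_curves j = {G. G \<noteq> A \<and> D j G \<ge> 1 \<and> D (Suc j) G = 0}"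

lemma M_eq_0_if_dot_nonpos:
  assumes j: "Suc j < m" and G: "G \<in> dropped_curves j" and dot_G: "dot (D (Suc j)) G \<le> 0"
    and l: "l \<notin> dropped_curves j" and l_j: "D j l \<ge> 1"
  shows "M l G = 0"
proof -
  have "D (Suc j) l \<ge> 1"
    using l l_j D_A[OF j] D_nonneg[OF j, of l] by (cases "l = A") (auto simp: dropped_curves_def)
  moreover have "D (Suc j) G = 0" and "l \<noteq> G"
    using G l by (auto simp: dropped_curves_def)
  ultimately have "dot (D (Suc j)) G \<ge> D (Suc j) l * M l G" and "M l G \<ge> 0"
    using dot_ge_coeff[of "D (Suc j)" G l] D_pos[OF j] M_nonneg_off_diag
    by (auto simp: less_fun_def)
  with \<open>D (Suc j) l \<ge> 1\<close> dot_G show ?thesis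
    by (smt (verit) mult_le_cancel_left1 mult_nonneg_nonneg)
qed

lemma dot_off_config_eq_0:
  assumes j: "Suc j < m" and Q: "Q \<subseteq> dropped_curves j"
    and isolated: "\<And>G F. G \<in> Q \<Longrightarrow> F \<in> dropped_curves j - Q \<Longrightarrow> M G F = 0"
    and dot_Q: "\<And>G. G \<in> Q \<Longrightarrow> dot (D (Suc j)) G \<le> 0"
    and G: "G \<in> Q"
  shows "dot (D j - (\<lambda>i. if i \<in> Q then D j i else 0)) G = 0"
proof -
  let ?W = "D j - (\<lambda>i. if i \<in> Q then D j i else 0)"
  have "?W l * M l G = 0" for l
  proof (cases "?W l = 0")
    case False
    then have "l \<notin> Q" and "D j l \<ge> 1"
      using D_nonneg[of j l] j by (auto split: if_splits)
    have "M l G = 0"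
    proof (cases "l \<in> dropped_curves j")
      case True
      then have "M G l = 0"
        using G \<open>l \<notin> Q\<close> isolated by blast
      then show ?thesis
        using M_sym by metis
    next
      case False
      then show ?thesis
        using G Q M_eq_0_if_dot_nonpos[OF j _ dot_Q[OF G]] \<open>D j l \<ge> 1\<close> by auto
    qed
    then show ?thesis by simp
  qed simp
  then have "(\<Sum>l\<in>UNIV. ?W l * M l G) = 0"
    by (simp only: sum.neutral_const)
  then show ?thesis
    by (simp add: inter_unitc_right)
qed

text \<open>Otherwise D j splits orthogonally into its part on Q and the rest, and the rest
  would have larger p_a than Z.\<close>
lemma config_meets_D_Suc:
  assumes j: "Suc j < m" and "E \<in> Q" and Q: "Q \<subseteq> dropped_curves j"
    and isolated: "\<And>G F. G \<in> Q \<Longrightarrow> F \<in> dropped_curves j - Q \<Longrightarrow> M G F = 0"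
  shows "\<exists>G\<in>Q. dot (D (Suc j)) G \<ge> 1"
proof (rule ccontr)
  assume "\<not> ?thesis"
  then have "dot (D (Suc j)) G \<le> 0" if "G \<in> Q" for G
    using that by force
  then have dot_W: "dot (D j - (\<lambda>i. if i \<in> Q then D j i else 0)) G = 0" if "G \<in> Q" for G
    using dot_off_config_eq_0[OF j Q isolated] that by blast
  have j': "j < m" using j by simp
  define X where "X = (\<lambda>i. if i \<in> Q then D j i else 0)"
  define W where "W = D j - X"
  have "inter M W X = 0"
    unfolding inter_eq_sum_unitc[of M W X] using dot_W
    by (auto simp: W_def X_def intro!: sum.neutral)
  moreover have "D j E \<ge> 1"
    using assms(2) Q by (auto simp: dropped_curves_def)
  then have "X E \<noteq> 0"
    using assms(2) by (simp add: X_def)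
  then have "X \<noteq> 0"
    by (metis zero_fun_apply)
  then have "adj M g X < 0"
    using inter_self_neg Q by (auto simp: adj_eq X_def dropped_curves_def)
  moreover have "D j = W + X"
    by (simp add: W_def)
  then have "adj M g (D j) = adj M g W + adj M g X + 2 * inter M W X"
    by (simp add: adj_add)
  ultimately have "adj M g W > adj M g Z"
    using adj_D[OF j'] by simp
  moreover have "0 < W"
    using D_nonneg[OF j'] D_A[OF j'] Q
    by (intro zero_less_funI[of _ A]) (auto simp: W_def X_def le_fun_def dropped_curves_def)
  moreover have "W \<le> D j"
    using D_nonneg[OF j'] by (simp add: W_def X_def le_fun_def)
  then have "W \<le> Z"
    using D_le_Z[OF j'] by simp
  ultimately show False
    using adj_le_fundamental by fastforce
qed

lemma inter_D_indicator_le: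
  assumes j: "Suc j < m" and Q: "Q \<subseteq> dropped_curves j" and "E \<in> Q" and "F \<in> Q" and "E \<noteq> F"
    and "dot (D j) E \<noteq> 0" and "dot (D j) F \<noteq> 0"
  shows "inter M (D j) (indicator_cycle Q) \<le> -2"
proof -
  have nonpos: "dot (D j) G \<le> 0" if "G \<in> Q" for G
    using dot_D_nonpos[of j G] j that Q by (auto simp: dropped_curves_def)
  have "inter M (D j) (indicator_cycle Q) = (\<Sum>G\<in>Q. dot (D j) G)"
    by (rule inter_indicator_cycle)
  also have "\<dots> = (\<Sum>G\<in>Q - {E, F}. dot (D j) G) + (\<Sum>G\<in>{E, F}. dot (D j) G)"
    using assms by (intro sum.subset_diff) auto
  also have "\<dots> \<le> 0 + (dot (D j) E + dot (D j) F)"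
    using assms nonpos by (intro add_mono sum_nonpos) auto
  also have "\<dots> \<le> -2"
    using assms nonpos[of E] nonpos[of F] by simp
  finally show ?thesis .
qed

text \<open>Otherwise D j minus the reduced cycle of Q would have larger p_a than Z.\<close>
lemma inter_indicator_self_le_inter_D:
  assumes j: "Suc j < m" and Q: "Q \<subseteq> dropped_curves j"
  shows "inter M (indicator_cycle Q) (indicator_cycle Q) \<le> 2 * inter M (D j) (indicator_cycle Q)"
proof -
  have j': "j < m" using j by simp
  define X where "X = D j - indicator_cycle Q"
  have A_Q: "A \<notin> Q"
    using Q by (auto simp: dropped_curves_def)
  then have "adj M g (indicator_cycle Q) = inter M (indicator_cycle Q) (indicator_cycle Q)"
    by (simp add: adj_eq indicator_cycle_def)
  then have "adj M g X = adj M g (D j) + inter M (indicator_cycle Q) (indicator_cycle Q)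
      - 2 * inter M (D j) (indicator_cycle Q)"
    by (simp add: X_def adj_diff inter_diff_left)
  moreover have "0 < X"
    using A_Q Q D_A[OF j'] D_nonneg[OF j']
    by (intro zero_less_funI[of _ A]) (auto simp: X_def indicator_cycle_def le_fun_def dropped_curves_def)
  moreover have "X \<le> D j"
    by (simp add: X_def indicator_cycle_def le_fun_def)
  then have "X \<le> Z"
    using D_le_Z[OF j'] by simp
  ultimately show ?thesis
    using adj_le_fundamental[of X] adj_D[OF j'] by simp
qed

text \<open>If a (-2)-curve E leaving the support meets D j negatively, a maximal isolated
  configuration Q through E contains a second curve F met positively by D (Suc j), hence
  negatively by D j; then D j . Q \<le> -2 < Q^2 / 2.\<close>
lemma dot_D_Suc_ge_1:
  assumes j: "Suc j < m" and E: "E \<in> dropped_curves j" and neg: "dot (D j) E < 0"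
  shows "dot (D (Suc j)) E \<ge> 1"
proof (rule ccontr)
  assume not_pos: "\<not> ?thesis"
  have "\<forall>F\<in>dropped_curves j. M F F = -2"
    using g_M_off_A by (simp add: dropped_curves_def)
  then obtain Q where "E \<in> Q" and Q: "Q \<subseteq> dropped_curves j"
    and Q_sq: "inter M (indicator_cycle Q) (indicator_cycle Q) \<ge> -2"
    and isolated: "\<And>G F. G \<in> Q \<Longrightarrow> F \<in> dropped_curves j - Q \<Longrightarrow> M G F = 0"
    using obtain_isolated_minus_two_config[OF E] by blast
  obtain F where F: "F \<in> Q" and dot_F: "dot (D (Suc j)) F \<ge> 1"
    using config_meets_D_Suc[OF j \<open>E \<in> Q\<close> Q isolated] by blast
  have "F \<noteq> E"
    using dot_F not_pos by auto
  have "dot (D j) F \<noteq> 0"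
    using dot_D_Suc_nonpos[OF j] F Q dot_F by (force simp: dropped_curves_def)
  then have "inter M (D j) (indicator_cycle Q) \<le> -2"
    using inter_D_indicator_le[OF j Q \<open>E \<in> Q\<close> F] \<open>F \<noteq> E\<close> neg by simp
  then show False
    using inter_indicator_self_le_inter_D[OF j Q] Q_sq by simp
qed

lemma dot_Zm_nonneg:
  assumes E: "E \<noteq> A" and "Zm E \<ge> 1"
  shows "dot Zm E \<ge> 0"
proof (rule ccontr)
  assume neg: "\<not> dot Zm E \<ge> 0"
  define X where "X = Zm - unitc E"
  have "0 < X"
    using Zm_pos Zm_A assms by (intro zero_less_funI[of _ A]) (auto simp: X_def le_fun_def unitc_def zero_less_fun_iff)
  moreover have "X \<le> Zm"
    by (simp add: X_def le_fun_def unitc_def)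
  then have "X \<le> Z"
    using Zm_le_Z by simp
  moreover have "adj M g X = adj M g Z - 2 - 2 * dot Zm E"
    using adj_diff_unitc[OF E] pa_Zm by (simp add: X_def adj_eq_pa)
  ultimately have "pa M g X = p"
    using adj_le_fundamental[of X] neg by (simp add: adj_eq_pa)
  then have "Zm \<le> X"
    using Zm_least \<open>0 < X\<close> \<open>X \<le> Z\<close> by blast
  then show False
    by (auto simp: X_def le_fun_def unitc_def dest: spec[of _ E])
qed

lemma dot_Zm_eq_0: "E \<noteq> A \<Longrightarrow> Zm E \<ge> 1 \<Longrightarrow> dot Zm E = 0"
  using dot_Zm_nonneg dot_D_nonpos[of "m - 1"] m_pos D_last by fastforce

lemma tail_A_inter_D_self_le:
  assumes "j < m"
  shows "tail (Suc j) A * inter M (D j) (D j) \<le> D j A * inter M (tail (Suc j)) (tail (Suc j))"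
proof -
  have "D j A * inter M (tail (Suc j)) (tail (Suc j)) - tail (Suc j) A * inter M (D j) (D j)
      = (\<Sum>l\<in>{Suc j..<m}. D j A * inter M (D l) (D l) - D l A * inter M (D j) (D j))"
    by (simp add: inter_tail_self tail_apply sum_distrib_left sum_distrib_right sum_subtractf)
  also have "\<dots> = (\<Sum>l\<in>{Suc j..<m}. (D j A - D l A) * (2 * p - 2))"
  proof (rule sum.cong[OF refl])
    fix l assume "l \<in> {Suc j..<m}"
    then have "l < m" by simp
    then show "D j A * inter M (D l) (D l) - D l A * inter M (D j) (D j) = (D j A - D l A) * (2 * p - 2)"
      unfolding inter_D_self[OF \<open>l < m\<close>] inter_D_self[OF assms] by (simp add: algebra_simps)
  qed
  also have "\<dots> \<ge> 0"
    using D_antimono p_pos by (intro sum_nonneg mult_nonneg_nonneg) (auto simp: le_fun_def)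
  finally show ?thesis by simp
qed

lemma dot_tail_nonneg_step:
  assumes j: "Suc j < m" and E: "E \<noteq> A" and E_j: "D j E \<ge> 1"
    and IH: "\<And>E. E \<noteq> A \<Longrightarrow> D (Suc j) E \<ge> 1 \<Longrightarrow> dot (tail (Suc j)) E = 0"
  shows "dot (tail j) E \<ge> 0"
proof -
  have j': "j < m" using j by simp
  have tail_j: "dot (tail j) E = dot (D j) E + dot (tail (Suc j)) E"
    by (simp add: tail_Suc[OF j'] inter_add_left)
  show ?thesis
  proof (cases "D (Suc j) E \<ge> 1")
    case True
    then show ?thesis
      using tail_j dot_D_next_support[OF j] IH[OF E] by simp
  next
    case False
    then have E_Suc: "D (Suc j) E = 0"
      using D_nonneg[OF j, of E] by simp
    show ?thesis
    proof (cases "dot (D j) E \<ge> 0")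
      case True
      then show ?thesis
        using tail_j dot_tail_nonneg[OF E_Suc] by simp
    next
      case False
      then have "dot (D j) E = -1"
        using dot_D_ge_minus_1[OF j' E E_j] by simp
      moreover have "dot (D (Suc j)) E \<ge> 1"
        using dot_D_Suc_ge_1[OF j] False E E_j E_Suc by (simp add: dropped_curves_def)
      ultimately show ?thesis
        using tail_j dot_tail_ge_dot_D[OF j E_Suc] by simp
    qed
  qed
qed

lemma inter_tail_self_eq:
  assumes "j < m" and IH: "\<And>E. E \<noteq> A \<Longrightarrow> D j E \<ge> 1 \<Longrightarrow> dot (tail j) E = 0"
  shows "inter M (tail j) (tail j) = tail j A * dot (tail j) A"
proof (rule inter_eq_coeff_mult_dot)
  fix E assume "E \<noteq> A" and "tail j E \<noteq> 0"
  then have "D j E \<noteq> 0"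
    using tail_eq_0 by blast
  moreover have "D j E \<ge> 0"
    using D_nonneg[OF assms(1)] .
  ultimately show "dot (tail j) E = 0"
    using IH \<open>E \<noteq> A\<close> by simp
qed

text \<open>The weights D j E * (tail j . E) are nonnegative off A and sum to D j^2 - (D j A)(tail (Suc j) . A),
  which tail_A_inter_D_self_le shows to be nonpositive; so they all vanish.\<close>
lemma dot_tail_eq_0_step:
  assumes j: "Suc j < m"
    and IH: "\<And>E. E \<noteq> A \<Longrightarrow> D (Suc j) E \<ge> 1 \<Longrightarrow> dot (tail (Suc j)) E = 0"
    and E: "E \<noteq> A" and E_j: "D j E \<ge> 1"
  shows "dot (tail j) E = 0"
proof -
  have j': "j < m" using j by simp
  define t where "t E' = D j E' * dot (tail j) E'" for E'
  have t_nonneg: "t E' \<ge> 0" if "E' \<noteq> A" for E'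
    using dot_tail_nonneg_step[OF j that _ IH] D_nonneg[OF j', of E'] 
    by (cases "D j E' = 0") (simp_all add: t_def)
  have "inter M (tail (Suc j)) (D j) = 0"
    using D_orthogonal_tail[of j "Suc j"] inter_sym by simp
  then have "(\<Sum>E'\<in>UNIV. t E') = inter M (D j) (D j)"
    unfolding t_def inter_eq_sum_unitc[of M "tail j" "D j", symmetric]
    by (simp add: tail_Suc[OF j'] inter_add_left)
  moreover have "t A = D j A * dot (tail (Suc j)) A"
    using dot_D_A[OF j] by (simp add: t_def tail_Suc[OF j'] inter_add_left)
  ultimately have rest: "(\<Sum>E'\<in>UNIV - {A}. t E') = inter M (D j) (D j) - D j A * dot (tail (Suc j)) A"
    using sum.remove[of UNIV A t] by simp
  have "tail (Suc j) A * (\<Sum>E'\<in>UNIV - {A}. t E') \<le> 0"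
    using tail_A_inter_D_self_le[OF j'] inter_tail_self_eq[OF j IH]
    by (simp add: rest algebra_simps)
  moreover have "tail (Suc j) A \<ge> 1"
    using D_A[OF j] tail_Suc[OF j] tail_nonneg[of "Suc (Suc j)" A] by simp
  ultimately have "(\<Sum>E'\<in>UNIV - {A}. t E') \<le> 0"
    by (simp add: mult_le_0_iff)
  then have "t E = 0"
    using t_nonneg sum_nonneg_eq_0_iff[of "UNIV - {A}" t] E by (auto intro: order.antisym sum_nonneg)
  then show ?thesis
    using E_j by (simp add: t_def)
qed

lemma dot_tail_eq_0:
  assumes "j < m" and "E \<noteq> A" and "D j E \<ge> 1"
  shows "dot (tail j) E = 0"
proof -
  from assms(1) have "j \<le> m - 1" by simp
  then have "\<forall>E. E \<noteq> A \<longrightarrow> D j E \<ge> 1 \<longrightarrow> dot (tail j) E = 0"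
  proof (induction j rule: inc_induct)
    case base
    show ?case
      using dot_Zm_eq_0 tail_last D_last by simp
  next
    case (step j)
    then show ?case
      using dot_tail_eq_0_step[of j] by simp
  qed
  then show ?thesis
    using assms by blast
qed

definition Y where "Y = sum_list Ds"

definition y where "y = dot Y A"

lemma Y_eq_tail: "Y = tail 0"
  by (simp add: Y_def sum_list_eq_tail)

lemma dot_Y_off_A: "E \<noteq> A \<Longrightarrow> dot Y E = 0"
  using dot_tail_eq_0[of 0 E] m_pos Z_ge_1[of E] by (simp add: Y_eq_tail D_0)

lemma inter_Y: "inter M Y X = X A * y"
  unfolding y_def using dot_Y_off_A by (intro inter_eq_coeff_mult_dot)

lemma inter_Y_self_sum: "inter M Y Y = (\<Sum>l<m. inter M (D l) (D l))"
  using inter_tail_self[of 0] by (simp add: Y_eq_tail atLeast0LessThan)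

lemma Y_A_sum: "Y A = (\<Sum>l<m. D l A)"
  by (simp add: Y_eq_tail tail_apply atLeast0LessThan)

lemma Y_A_ge_1: "Y A \<ge> 1"
  using tail_Suc[OF m_pos] tail_nonneg[of 1 A] Z_ge_1[of A] by (simp add: Y_eq_tail D_0)

lemma Y_nonneg: "Y \<ge> 0"
  using tail_nonneg by (simp add: Y_eq_tail le_fun_def)

lemma D_A_cases: "l < m \<Longrightarrow> D l A = k \<or> (K_dot_A = 1 \<and> D l A = k - 1)"
proof -
  assume l: "l < m"
  have "inter M (D l) (D l) < 0"
    using D_pos[OF l] by (intro inter_self_neg) simp
  then have "K_dot_A * (k - D l A) < 2"
    using inter_D_self[OF l] k_mult_K_dot_A by (simp add: algebra_simps)
  moreover have "D l A \<le> k"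
    using D_le_Z[OF l] by (simp add: le_fun_def)
  ultimately show ?thesis
    using K_dot_A_pos by (smt (verit) mult_le_cancel_left1 mult_less_cancel_left1)
qed

text \<open>If some D l has A-coefficient k - 1, then K.A = 1 and Zm has the same A-coefficient,
  so Zm^2 = -1; as Zm is orthogonal to its (-2)-curves, Zm^2 = (Zm A)(Zm . A) forces
  k = 2, whence p = k (K.A) / 2 = 1.\<close>
lemma D_A_eq_k:
  assumes "p \<ge> 2" and l: "l < m"
  shows "D l A = k"
proof (rule ccontr)
  assume "D l A \<noteq> k"
  then have K_dot_A_1: "K_dot_A = 1" and "D l A = k - 1"
    using D_A_cases[OF l] by auto
  have last: "m - 1 < m"
    using m_pos by simp
  have "Zm A \<le> D l A"
    using D_antimono[of l "m - 1"] l D_last by (simp add: le_fun_def)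
  then have Zm_A_eq: "Zm A = k - 1"
    using D_A_cases[OF last] D_last \<open>D l A = k - 1\<close> K_dot_A_1 by auto
  have "inter M Zm Zm = -1"
    using inter_D_self[OF last] D_last Zm_A_eq K_dot_A_1 k_mult_K_dot_A by simp
  moreover have "inter M Zm Zm = Zm A * dot Zm A"
  proof (rule inter_eq_coeff_mult_dot)
    fix E assume "E \<noteq> A" and "Zm E \<noteq> 0"
    moreover have "Zm E \<ge> 0"
      using Zm_pos by (simp add: zero_less_fun_iff)
    ultimately show "dot Zm E = 0"
      using dot_Zm_eq_0 by simp
  qed
  ultimately have "(k - 1) * (- dot Zm A) = 1"
    using Zm_A_eq by simp
  moreover have "k - 1 > 0"
    using Zm_A Zm_A_eq by simp
  ultimately have "k - 1 = 1"
    using pos_zmult_eq_1_iff by blast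
  then show False
    using k_mult_K_dot_A K_dot_A_1 assms(1) by simp
qed

lemma K_dot_A_eq: "K_dot_A = - p * y"
proof -
  have "K_dot_A * D l A + p * inter M (D l) (D l) = 0" if l: "l < m" for l
  proof (cases "p \<ge> 2")
    case True
    then show ?thesis
      using inter_D_self[OF l] D_A_eq_k[OF True l] k_mult_K_dot_A by (simp add: algebra_simps)
  next
    case False
    then have "p = 1"
      using p_pos by simp
    then show ?thesis
      using inter_D_self[OF l] by (simp add: algebra_simps)
  qed
  then have "K_dot_A * Y A + p * inter M Y Y = 0"
    by (simp add: Y_A_sum inter_Y_self_sum sum_distrib_left sum.distrib[symmetric])
  then have "(K_dot_A + p * y) * Y A = 0"
    using inter_Y[of Y] by (simp add: algebra_simps)
  then show ?thesis
    using Y_A_ge_1 by simp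
qed

lemma y_neg: "y < 0"
  using K_dot_A_eq K_dot_A_pos p_pos by (simp add: mult_less_0_iff)

lemma inter_Y_self: "p \<ge> 2 \<Longrightarrow> inter M Y Y = - 2 * int m"
  using inter_D_self D_A_eq_k k_mult_K_dot_A by (simp add: inter_Y_self_sum mult.commute[of K_dot_A k])

lemma k_y: "p \<ge> 2 \<Longrightarrow> k * y = -2"
proof -
  assume p: "p \<ge> 2"
  have "Y A = k * int m"
    using D_A_eq_k[OF p] by (simp add: Y_A_sum)
  then have "(k * y + 2) * int m = 0"
    using inter_Y[of Y] inter_Y_self[OF p] by (simp add: algebra_simps)
  then show ?thesis
    using m_pos by simp
qed

lemma adj_eq_inter_Y: "adj M g X = inter M X X - p * inter M Y X"
  by (simp add: adj_eq inter_Y K_dot_A_eq)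

lemma inter_self_le_inter_Y_below_Z:
  assumes "0 < U" and "U \<le> Z"
  shows "inter M U U \<le> inter M Y U"
proof -
  have adj_U: "inter M U U - p * (U A * y) \<le> 2 * p - 2"
    using adj_le_fundamental[OF assms] adj_Z adj_eq_inter_Y[of U] by (simp add: inter_Y)
  have UU: "inter M U U < 0"
    using assms(1) by (intro inter_self_neg) simp
  have "U A \<ge> 0" and "U A \<le> k"
    using assms by (auto simp: zero_less_fun_iff le_fun_def)
  consider "p = 1" | "p \<ge> 2" "U A = k" | "p \<ge> 2" "U A = 0" | "p \<ge> 2" "0 < U A" "U A < k"
    using p_pos \<open>U A \<ge> 0\<close> \<open>U A \<le> k\<close> by linarith
  then have "inter M U U \<le> U A * y"
  proof cases
    case 1
    then show ?thesis using adj_U by simp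
  next
    case 2
    then have "(p - 1) * (U A * y) = (p - 1) * (- 2)"
      using k_y by simp
    then show ?thesis
      using adj_U by (simp add: algebra_simps)
  next
    case 3
    then show ?thesis using UU by simp
  next
    case 4
    then have "k * y \<le> k * (-1)"
      using y_neg by (intro mult_left_mono) auto
    then have "k = 2"
      using 4 k_y by auto
    moreover have "y = -1"
      using \<open>k = 2\<close> k_y 4 by simp
    ultimately show ?thesis
      using 4 UU by simp
  qed
  then show ?thesis
    by (simp add: inter_Y)
qed

text \<open>Split off min(X, Z), which meets the excess nonpositively, and recurse on the excess.\<close>
lemma inter_self_le_inter_Y_nonneg:
  assumes "X \<ge> 0"
  shows "inter M X X \<le> inter M Y X"
  using assms
proof (induction "nat (\<Sum>i\<in>UNIV. X i)" arbitrary: X rule: less_induct)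
  case less
  show ?case
  proof (cases "X = 0")
    case False
    then obtain i where "X i \<noteq> 0"
      by (auto simp: fun_eq_iff)
    define U where "U = (\<lambda>i. min (X i) (Z i))"
    define W where "W = X - U"
    have U_nonneg: "U \<ge> 0"
      using less.prems Z_ge_1 by (simp add: U_def le_fun_def order.trans[OF zero_le_one])
    have "X i \<ge> 0"
      using less.prems by (simp add: le_fun_def)
    then have U_i: "U i \<ge> 1"
      using Z_ge_1[of i] \<open>X i \<noteq> 0\<close> by (simp add: U_def)
    then have "0 < U"
      using U_nonneg by (intro zero_less_funI[of _ i]) simp_all
    moreover have "U \<le> Z"
      by (simp add: U_def le_fun_def)
    ultimately have U: "inter M U U \<le> inter M Y U"
      by (rule inter_self_le_inter_Y_below_Z)
    have "W \<ge> 0"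
      by (simp add: W_def U_def le_fun_def)
    moreover have "U i \<le> (\<Sum>j\<in>UNIV. U j)"
      using U_nonneg by (intro member_le_sum) (auto simp: le_fun_def)
    then have "(\<Sum>j\<in>UNIV. U j) \<ge> 1"
      using U_i by simp
    then have "nat (\<Sum>j\<in>UNIV. W j) < nat (\<Sum>j\<in>UNIV. X j)"
      using \<open>W \<ge> 0\<close> sum_nonneg[of UNIV W] by (simp add: W_def sum_subtractf le_fun_def)
    ultimately have W: "inter M W W \<le> inter M Y W"
      using less.hyps by blast
    have "inter M U W \<le> 0"
      using inter_min_Z_excess_nonpos[OF less.prems] by (simp add: U_def W_def)
    moreover have "X = U + W"
      by (simp add: W_def)
    ultimately show ?thesis
      using U W by (simp add: inter_add_left inter_add_right inter_sym[of W U])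
  qed simp
qed

lemma inter_self_le_inter_Y: "inter M X X \<le> inter M Y X"
proof -
  define Xp where "Xp = (\<lambda>i. max (X i) 0)"
  define Xn where "Xn = (\<lambda>i. max (- X i) 0)"
  have "Xp \<ge> 0" and "Xn \<ge> 0"
    by (simp_all add: Xp_def Xn_def le_fun_def)
  have "inter M Xp Xn \<ge> 0"
    using \<open>Xp \<ge> 0\<close> \<open>Xn \<ge> 0\<close> by (rule inter_disjoint_supports_nonneg) (simp add: Xp_def Xn_def)
  moreover have "inter M Y Xn \<le> 0"
    using \<open>Xn \<ge> 0\<close> y_neg by (simp add: inter_Y le_fun_def mult_nonneg_nonpos)
  moreover have X: "X = Xp - Xn"
    by (auto simp: Xp_def Xn_def fun_eq_iff)
  have "inter M X X - inter M Y X
      = (inter M Xp Xp - inter M Y Xp) - 2 * inter M Xp Xn + inter M Xn Xn + inter M Y Xn"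
    unfolding X by (simp add: inter_diff_left inter_diff_right inter_sym[of Xn Xp] algebra_simps)
  ultimately show ?thesis
    using inter_self_le_inter_Y_nonneg[OF \<open>Xp \<ge> 0\<close>] inter_self_nonpos[of Xn] by simp
qed

lemma adj_le_bound: "adj M g X \<le> 2 * int m * ((p + 1) div 2) * (p div 2)"
proof (cases "even p")
  case True
  then obtain r where p: "p = 2 * r" by blast
  then have "p \<ge> 2"
    using p_pos by simp
  define V where "V = (\<lambda>i. 1 * X i + (- r) * Y i)"
  have "adj M g X = inter M V V - r\<^sup>2 * inter M Y Y"
    unfolding adj_eq_inter_Y V_def inter_lin_left inter_lin_right
    by (simp add: p inter_sym[of X Y] power2_eq_square algebra_simps)
  also have "\<dots> \<le> - r\<^sup>2 * inter M Y Y"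
    using inter_self_nonpos[of V] by simp
  also have "\<dots> = 2 * int m * ((p + 1) div 2) * (p div 2)"
    using inter_Y_self[OF \<open>p \<ge> 2\<close>] p by (simp add: power2_eq_square)
  finally show ?thesis .
next
  case False
  then obtain r where p: "p = 2 * r + 1" using oddE by blast
  define V where "V = (\<lambda>i. 1 * X i + (- r) * Y i)"
  have "adj M g X = (inter M V V - inter M Y V) - (r\<^sup>2 + r) * inter M Y Y"
    unfolding adj_eq_inter_Y V_def inter_lin_left inter_lin_right
    by (simp add: p inter_sym[of X Y] power2_eq_square algebra_simps)
  also have "\<dots> \<le> - ((r\<^sup>2 + r) * inter M Y Y)"
    using inter_self_le_inter_Y[of V] by simp
  also have "\<dots> = 2 * int m * ((p + 1) div 2) * (p div 2)"
  proof (cases "r = 0")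
    case False
    then have "p \<ge> 2"
      using p p_pos by simp
    then show ?thesis
      using inter_Y_self p by (simp add: power2_eq_square algebra_simps)
  qed (simp add: p)
  finally show ?thesis .
qed

lemma adj_multiple_Y: "adj M g (\<lambda>i. ((p + 1) div 2) * Y i) = 2 * int m * ((p + 1) div 2) * (p div 2)"
proof -
  have "adj M g (\<lambda>i. ((p + 1) div 2) * Y i) = ((p + 1) div 2) * ((p + 1) div 2 - p) * inter M Y Y"
    unfolding adj_eq_inter_Y inter_scale_left inter_scale_right by (simp add: algebra_simps)
  also have "\<dots> = 2 * int m * ((p + 1) div 2) * (p div 2)"
  proof (cases "p \<ge> 2")
    case True
    have "(p + 1) div 2 - p = - (p div 2)" by presburger
    then show ?thesis
      using inter_Y_self[OF True] by simp
  next
    case False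
    then have "p = 1" using p_pos by simp
    then show ?thesis by simp
  qed
  finally show ?thesis .
qed

lemma pa_multiple_Y: "pa M g (\<lambda>i. ((p + 1) div 2) * Y i) = int m * ((p + 1) div 2) * (p div 2) + 1"
  using adj_multiple_Y adj_eq_pa[of "\<lambda>i. ((p + 1) div 2) * Y i"] by simp

lemma pa_sing_eq: "pa_sing M g = int m * ((p + 1) div 2) * (p div 2) + 1"
  unfolding pa_sing_def
proof (rule Greatest_equality)
  have "(p + 1) div 2 \<ge> 1"
    using p_pos by simp
  then have "0 < (\<lambda>i. ((p + 1) div 2) * Y i)"
    using Y_nonneg Y_A_ge_1 by (intro zero_less_funI[of _ A]) (auto simp: le_fun_def)
  then show "\<exists>X. 0 < X \<and> int m * ((p + 1) div 2) * (p div 2) + 1 = pa M g X"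
    using pa_multiple_Y by metis
next
  fix x assume "\<exists>X. 0 < X \<and> x = pa M g X"
  then obtain X where "x = pa M g X"
    by blast
  moreover have "2 * pa M g X - 2 \<le> 2 * (int m * ((p + 1) div 2) * (p div 2))"
    using adj_le_bound[of X] adj_eq_pa[of X] by (simp add: mult.assoc)
  ultimately show "x \<le> int m * ((p + 1) div 2) * (p div 2) + 1"
    by simp
qed

end

theorem theorem3p13:
  fixes M :: "'e::finite \<Rightarrow> 'e \<Rightarrow> int" and g :: "'e \<Rightarrow> int"
    and Z Zm :: "'e \<Rightarrow> int" and Ds :: "('e \<Rightarrow> int) list"
  assumes "resolution_data M g"
    and "fund_cycle_on M UNIV Z"
    and "inter M Z Z = -2"
    and "pa M g Z > 0"
    and "ess_irreducible M g Z"
    and "is_Zmin M g Z Zm"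
    and "yau_seq M g Z Zm Ds"
    and "last Ds = Zm"
  shows "let p = pa M g Z; m = int (length Ds); Y = sum_list Ds; q = (p - 1) div 2 in
      pa_sing M g = pa M g (\<lambda>i. (q + 1) * Y i) \<and>
      pa M g (\<lambda>i. (q + 1) * Y i) = m * (p - 1 - q) * ((p + 1) div 2) + 1 \<and>
      m * (p - 1 - q) * ((p + 1) div 2) + 1 = (p ^ 2 div 4) * m + 1"
proof -
  interpret fundamental_cycle M g Z
    using assms(1,2) by unfold_locales
  obtain A where "\<And>E. E \<noteq> A \<Longrightarrow> minus_two_curve M g E"
    using ess_irreducible_obtain_component[OF assms(5)] by blast
  then interpret degree_two_ess_irreducible M g Z Zm Ds A
    using assms by unfold_locales auto
  have q1: "(p - 1) div 2 + 1 = (p + 1) div 2" and q2: "p - 1 - (p - 1) div 2 = p div 2"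
    by presburger+
  show ?thesis
    unfolding Let_def Y_def[symmetric] q1 q2
    using pa_sing_eq pa_multiple_Y int_div_2_mult[of p] by (simp add: mult_ac)
qed

end
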